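(* Let $G$ be an almost well-covered $\{C_3,C_4,C_5,C_7\}$-free graph with no vertex of type $2$. Then every connected component of $G_0$ is isomorphic to one of $P_1$, $P_2$, $P_3$, $P_4$, $P_5$, $P_6$, $P_7$, $P_8$, $P_{10}$, $C_6$, $C_8$, $C_9$, $C_{10}$, $C_{11}$, $C_{13}$.
   Context: All graphs are finite and simple. $P_n$ and $C_n$ denote the path and cycle on $n$ vertices; $G$ is $\{C_3,C_4,C_5,C_7\}$-free if it has no induced subgraph isomorphic to any of these cycles. For a graph $G$, $\alpha(G)$ is the maximum size of an independent set and $i(G)$ the minimum size of an inclusion-maximal independent set; $G$ is almost well-covered if $\alpha(G)-i(G)=1$. Types of vertices: let $U$ be the set of vertices of $G$ whose connected component is a complete graph. In $G-U$, vertices of degree $1$ are leaves and the others are internal vertices. An internal vertex adjacent to exactly $k$ leaves is of type $k$; every vertex of $U$ is of type $0$. $G_0$ denotes the subgraph of $G$ induced by all vertices of type $0$. *)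

theory Defs
  imports Main
begin

definition simple_graph :: "'a set \<Rightarrow> ('a \<Rightarrow> 'a \<Rightarrow> bool) \<Rightarrow> bool" where
  "simple_graph V E \<longleftrightarrow> finite V \<and> (\<forall>x y. E x y \<longrightarrow> x \<in> V \<and> y \<in> V)
     \<and> (\<forall>x y. E x y \<longrightarrow> E y x) \<and> (\<forall>x. \<not> E x x)"

definition path_adj :: "nat \<Rightarrow> nat \<Rightarrow> bool" where
  "path_adj i j \<longleftrightarrow> j = Suc i \<or> i = Suc j"

definition cycle_adj :: "nat \<Rightarrow> nat \<Rightarrow> nat \<Rightarrow> bool" where
  "cycle_adj n i j \<longleftrightarrow> j = Suc i mod n \<or> i = Suc j mod n"

definition has_induced_cycle :: "'a set \<Rightarrow> ('a \<Rightarrow> 'a \<Rightarrow> bool) \<Rightarrow> nat \<Rightarrow> bool" where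
  "has_induced_cycle V E n \<longleftrightarrow> (\<exists>f. inj_on f {0..<n} \<and> f ` {0..<n} \<subseteq> V \<and>
      (\<forall>i<n. \<forall>j<n. E (f i) (f j) \<longleftrightarrow> cycle_adj n i j))"

definition induced_iso_path :: "('a \<Rightarrow> 'a \<Rightarrow> bool) \<Rightarrow> 'a set \<Rightarrow> nat \<Rightarrow> bool" where
  "induced_iso_path E C n \<longleftrightarrow> (\<exists>f. bij_betw f {0..<n} C \<and>
      (\<forall>i<n. \<forall>j<n. E (f i) (f j) \<longleftrightarrow> path_adj i j))"

definition induced_iso_cycle :: "('a \<Rightarrow> 'a \<Rightarrow> bool) \<Rightarrow> 'a set \<Rightarrow> nat \<Rightarrow> bool" where
  "induced_iso_cycle E C n \<longleftrightarrow> (\<exists>f. bij_betw f {0..<n} C \<and>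
      (\<forall>i<n. \<forall>j<n. E (f i) (f j) \<longleftrightarrow> cycle_adj n i j))"

definition indep :: "'a set \<Rightarrow> ('a \<Rightarrow> 'a \<Rightarrow> bool) \<Rightarrow> 'a set \<Rightarrow> bool" where
  "indep V E S \<longleftrightarrow> S \<subseteq> V \<and> (\<forall>x\<in>S. \<forall>y\<in>S. \<not> E x y)"

definition max_indep :: "'a set \<Rightarrow> ('a \<Rightarrow> 'a \<Rightarrow> bool) \<Rightarrow> 'a set \<Rightarrow> bool" where
  "max_indep V E S \<longleftrightarrow> indep V E S \<and> (\<forall>v\<in>V - S. \<not> indep V E (insert v S))"

definition alpha :: "'a set \<Rightarrow> ('a \<Rightarrow> 'a \<Rightarrow> bool) \<Rightarrow> nat" where
  "alpha V E = Max (card ` {S. indep V E S})"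

definition indep_dom :: "'a set \<Rightarrow> ('a \<Rightarrow> 'a \<Rightarrow> bool) \<Rightarrow> nat" where
  "indep_dom V E = Min (card ` {S. max_indep V E S})"

definition almost_well_covered :: "'a set \<Rightarrow> ('a \<Rightarrow> 'a \<Rightarrow> bool) \<Rightarrow> bool" where
  "almost_well_covered V E \<longleftrightarrow> int (alpha V E) - int (indep_dom V E) = 1"

text \<open>Connected component of x in the graph (V,E) (E assumed to live inside V).\<close>
definition component :: "('a \<Rightarrow> 'a \<Rightarrow> bool) \<Rightarrow> 'a \<Rightarrow> 'a set" where
  "component E x = {y. E\<^sup>*\<^sup>* x y}"

definition U_set :: "'a set \<Rightarrow> ('a \<Rightarrow> 'a \<Rightarrow> bool) \<Rightarrow> 'a set" where
  "U_set V E = {v \<in> V. \<forall>x\<in>component E v. \<forall>y\<in>component E v. x \<noteq> y \<longrightarrow> E x y}"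

definition deg_GU :: "'a set \<Rightarrow> ('a \<Rightarrow> 'a \<Rightarrow> bool) \<Rightarrow> 'a \<Rightarrow> nat" where
  "deg_GU V E v = card {u \<in> V - U_set V E. E v u}"

definition is_leaf :: "'a set \<Rightarrow> ('a \<Rightarrow> 'a \<Rightarrow> bool) \<Rightarrow> 'a \<Rightarrow> bool" where
  "is_leaf V E v \<longleftrightarrow> v \<in> V - U_set V E \<and> deg_GU V E v = 1"

definition is_internal :: "'a set \<Rightarrow> ('a \<Rightarrow> 'a \<Rightarrow> bool) \<Rightarrow> 'a \<Rightarrow> bool" where
  "is_internal V E v \<longleftrightarrow> v \<in> V - U_set V E \<and> deg_GU V E v \<noteq> 1"

definition has_type :: "'a set \<Rightarrow> ('a \<Rightarrow> 'a \<Rightarrow> bool) \<Rightarrow> 'a \<Rightarrow> nat \<Rightarrow> bool" where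
  "has_type V E v k \<longleftrightarrow> (v \<in> U_set V E \<and> k = 0) \<or>
     (is_internal V E v \<and> card {u \<in> V - U_set V E. E v u \<and> is_leaf V E u} = k)"

definition V0 :: "'a set \<Rightarrow> ('a \<Rightarrow> 'a \<Rightarrow> bool) \<Rightarrow> 'a set" where
  "V0 V E = {v \<in> V. has_type V E v 0}"

definition E0 :: "'a set \<Rightarrow> ('a \<Rightarrow> 'a \<Rightarrow> bool) \<Rightarrow> 'a \<Rightarrow> 'a \<Rightarrow> bool" where
  "E0 V E x y \<longleftrightarrow> E x y \<and> x \<in> V0 V E \<and> y \<in> V0 V E"

end

(*
  Let C be the component of G_0 containing x.  Excluding induced C_3, C_5 and C_7 excludes every
  closed walk of odd length at most 7, and excluding induced C_3 and C_4 excludes every 4-cycle: a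
  repeated vertex or a chord splits a closed walk into two shorter ones, one of which is odd.

  The counting principle: let T be an independent set of supports and M \<subseteq> C an independent set that
  dominates the vertices of C not adjacent to T.  Then T, the leaves not adjacent to T and M extend to
  a maximal independent set S, and as every support in T owns a private leaf, |S| \<le> |L| + |M| + |R|
  where L is the set of leaves and R = S \<inter> (V(G_0) - C).  Since L \<union> J \<union> R is independent for every
  independent J \<subseteq> C, the equation alpha(G) = i(G) + 1 yields |J| \<le> |M| + 1.

  A vertex u of C with three neighbours in C violates this for J = N(u) \<union> K and M = {u} \<union> K, where T
  consists of the supports adjacent to the second neighbourhood of u and K is a maximal independent
  set of the remaining vertices of C; the missing short odd closed walks and 4-cycles make these sets
  independent and dominating.  So C is a path or a cycle on n vertices, and choosing J as every other
  and M as every third vertex gives (n + 1) div 2, resp. n div 2, \<le> (n + 2) div 3 + 1.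
*)
theory Submission
  imports Defs
begin

locale graph =
  fixes V :: "'a set" and E :: "'a \<Rightarrow> 'a \<Rightarrow> bool"
  assumes simple: "simple_graph V E"
begin

lemma finite_V: "finite V"
  and edge_in_V: "E a b \<Longrightarrow> a \<in> V \<and> b \<in> V"
  and edge_sym: "E a b \<Longrightarrow> E b a"
  and no_loop: "\<not> E a a"
  using simple unfolding simple_graph_def by blast+

section \<open>Closed walks and short cycles\<close>

definition closed_walk :: "'a list \<Rightarrow> bool" where
  "closed_walk ws \<longleftrightarrow> ws \<noteq> [] \<and> successively E ws \<and> E (last ws) (hd ws)"

lemma closed_walk_nth:
  assumes "closed_walk ws" "i < length ws"
  shows "E (ws ! i) (ws ! (Suc i mod length ws))"
proof (cases "Suc i < length ws")
  case True
  then show ?thesis using assms(1) by (simp add: closed_walk_def successively_nth)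
next
  case False
  then have "i = length ws - 1" using assms(2) by simp
  then show ?thesis using assms
    by (auto simp: closed_walk_def last_conv_nth hd_conv_nth)
qed

lemma closed_walk_in_V: "closed_walk ws \<Longrightarrow> set ws \<subseteq> V"
  using closed_walk_nth edge_in_V by (metis in_set_conv_nth subsetI)

lemma closed_walk_rotate: "closed_walk (xs @ ys) \<Longrightarrow> closed_walk (ys @ xs)"
  by (cases "xs = []"; cases "ys = []")
    (auto simp: closed_walk_def successively_append_iff)

lemma closed_walk_split_repeat:
  "closed_walk (a # ys @ a # zs) \<Longrightarrow> closed_walk (a # ys) \<and> closed_walk (a # zs)"
  by (auto simp: closed_walk_def successively_append_iff successively_Cons[of _ a])

lemma closed_walk_split_chord:
  assumes "closed_walk (a # ys @ b # zs)" "E a b"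
  shows "closed_walk (a # ys @ [b]) \<and> closed_walk (a # b # zs)"
proof -
  have "successively E (a # ys)" "successively E (b # zs)" "E (last (a # ys)) b"
    "E (last (b # zs)) a"
    using assms(1) successively_append_iff[of E "a # ys" "b # zs"] by (auto simp: closed_walk_def)
  then show ?thesis
    using assms(2) successively_append_iff[of E "a # ys" "[b]"]
    by (auto simp: closed_walk_def edge_sym)
qed

lemma closed_walk_split_at_repeated_vertex:
  assumes walk: "closed_walk ws" and "\<not> distinct ws"
  obtains ws1 ws2 where "closed_walk ws1" "closed_walk ws2"
    "length ws1 + length ws2 = length ws"
    "length ws1 < length ws" "length ws2 < length ws"
proof -
  obtain xs ys zs a where decomp: "ws = xs @ [a] @ ys @ [a] @ zs"
    using not_distinct_decomp[OF \<open>\<not> distinct ws\<close>] by blast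
  then have "closed_walk (a # ys @ a # zs @ xs)"
    using closed_walk_rotate[of xs "a # ys @ a # zs"] walk by simp
  then have "closed_walk (a # ys)" "closed_walk (a # zs @ xs)"
    using closed_walk_split_repeat by blast+
  then show ?thesis
    using that[of "a # ys" "a # zs @ xs"] decomp by simp
qed

lemma closed_walk_split_at_chord:
  assumes walk: "closed_walk ws" and ij: "i < j" "j < length ws"
    and chord: "E (ws ! i) (ws ! j)" "\<not> cycle_adj (length ws) i j"
  obtains ws1 ws2 where "closed_walk ws1" "closed_walk ws2"
    "length ws1 + length ws2 = length ws + 2"
    "length ws1 < length ws" "length ws2 < length ws"
proof -
  define xs ys zs where "xs = take i ws" and "ys = take (j - Suc i) (drop (Suc i) ws)"
    and "zs = drop (Suc j) ws"
  have "drop (Suc i) ws = ys @ ws ! j # zs"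
    using id_take_nth_drop[of "j - Suc i" "drop (Suc i) ws"] ij by (simp add: ys_def zs_def)
  then have decomp: "ws = xs @ ws ! i # ys @ ws ! j # zs"
    using id_take_nth_drop[of i ws] ij by (simp add: xs_def)
  then have "closed_walk (ws ! i # ys @ ws ! j # zs @ xs)"
    using closed_walk_rotate[of xs] walk by (metis append.assoc append_Cons)
  then have "closed_walk (ws ! i # ys @ [ws ! j])" "closed_walk (ws ! i # ws ! j # zs @ xs)"
    using closed_walk_split_chord chord(1) by blast+
  moreover have "ys \<noteq> []"
    using chord(2) ij unfolding cycle_adj_def ys_def by auto
  moreover have "zs @ xs \<noteq> []"
  proof (cases "Suc j = length ws")
    case True
    then show ?thesis using chord(2) ij unfolding cycle_adj_def xs_def by auto
  qed (use ij in \<open>simp add: zs_def\<close>)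
  moreover have "length ws = length xs + length ys + length zs + 2"
    by (subst decomp) simp
  ultimately show ?thesis
    using that[of "ws ! i # ys @ [ws ! j]" "ws ! i # ws ! j # zs @ xs"] by auto
qed

lemma has_induced_cycle_if_chordless:
  assumes walk: "closed_walk ws" and "distinct ws"
    and chordless: "\<And>i j. i < length ws \<Longrightarrow> j < length ws \<Longrightarrow> E (ws ! i) (ws ! j) \<Longrightarrow>
       cycle_adj (length ws) i j"
  shows "has_induced_cycle V E (length ws)"
  unfolding has_induced_cycle_def
proof (intro exI conjI allI impI)
  show "inj_on ((!) ws) {0..<length ws}"
    using \<open>distinct ws\<close> by (simp add: inj_on_nth)
  show "(!) ws ` {0..<length ws} \<subseteq> V"
    using closed_walk_in_V[OF walk] by auto
  fix i j assume ij: "i < length ws" "j < length ws"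
  show "E (ws ! i) (ws ! j) = cycle_adj (length ws) i j"
    using chordless[OF ij] closed_walk_nth[OF walk] ij edge_sym
    unfolding cycle_adj_def by blast
qed

lemma induced_cycle_or_chord_split:
  assumes "closed_walk ws" "distinct ws"
  obtains (induced) "has_induced_cycle V E (length ws)"
  | (split) ws1 ws2 where "closed_walk ws1" "closed_walk ws2"
      "length ws1 + length ws2 = length ws + 2"
      "length ws1 < length ws" "length ws2 < length ws"
proof (cases "\<exists>i j. i < j \<and> j < length ws \<and> E (ws ! i) (ws ! j) \<and> \<not> cycle_adj (length ws) i j")
  case True
  then obtain i j where "i < j" "j < length ws" "E (ws ! i) (ws ! j)" "\<not> cycle_adj (length ws) i j"
    by blast
  with assms(1) show ?thesis
    by (rule closed_walk_split_at_chord) (rule split)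
next
  case False
  have "has_induced_cycle V E (length ws)"
  proof (rule has_induced_cycle_if_chordless[OF assms])
    fix i j assume ij: "i < length ws" "j < length ws" "E (ws ! i) (ws ! j)"
    consider "i < j" | "i = j" | "j < i" by linarith
    then show "cycle_adj (length ws) i j"
      using False ij edge_sym no_loop unfolding cycle_adj_def by cases blast+
  qed
  then show ?thesis by (rule induced)
qed

end

locale C3457_free_graph = graph +
  assumes no_C3: "\<not> has_induced_cycle V E 3" and no_C4: "\<not> has_induced_cycle V E 4"
    and no_C5: "\<not> has_induced_cycle V E 5" and no_C7: "\<not> has_induced_cycle V E 7"
begin

lemma no_short_odd_closed_walk:
  "closed_walk ws \<Longrightarrow> odd (length ws) \<Longrightarrow> length ws \<le> 7 \<Longrightarrow> False"
proof (induction "length ws" arbitrary: ws rule: less_induct)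
  case less
  have shorter_walks: False
    if "closed_walk ws1" "closed_walk ws2" "odd (length ws1) \<or> odd (length ws2)"
      "length ws1 < length ws" "length ws2 < length ws" for ws1 ws2
    using that less.hyps less.prems(3) by (meson le_trans less_imp_le)
  show False
  proof (cases "distinct ws")
    case False
    with less.prems(1) obtain ws1 ws2 where "closed_walk ws1" "closed_walk ws2"
      "length ws1 + length ws2 = length ws" "length ws1 < length ws" "length ws2 < length ws"
      by (rule closed_walk_split_at_repeated_vertex)
    moreover from this(3) less.prems(2) have "odd (length ws1) \<or> odd (length ws2)"
      by presburger
    ultimately show False using shorter_walks by blast
  next
    case True
    with less.prems(1) show False
    proof (cases rule: induced_cycle_or_chord_split)
      case induced
      moreover have "length ws \<noteq> 1"
        using less.prems(1) no_loop by (auto simp: closed_walk_def length_Suc_conv)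
      then have "length ws = 3 \<or> length ws = 5 \<or> length ws = 7"
        using less.prems(2,3) by presburger
      ultimately show False
        using no_C3 no_C5 no_C7 by auto
    next
      case (split ws1 ws2)
      moreover from split(3) less.prems(2) have "odd (length ws1) \<or> odd (length ws2)"
        by presburger
      ultimately show False using shorter_walks by blast
    qed
  qed
qed

lemma no_4_cycle:
  assumes "closed_walk ws" "distinct ws" "length ws = 4"
  shows False
  using assms(1,2)
proof (cases rule: induced_cycle_or_chord_split)
  case (split ws1 ws2)
  then have "length ws1 = 3" using assms(3) by simp
  then show False
    using no_short_odd_closed_walk[of ws1] split(1) by simp
qed (use no_C4 assms(3) in simp)

lemma no_triangle: "E a b \<Longrightarrow> E b c \<Longrightarrow> E c a \<Longrightarrow> False"
  using no_short_odd_closed_walk[of "[a, b, c]"] by (simp add: closed_walk_def)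

lemma no_square: "E a b \<Longrightarrow> E b c \<Longrightarrow> E c d \<Longrightarrow> E d a \<Longrightarrow> a \<noteq> c \<Longrightarrow> b \<noteq> d \<Longrightarrow> False"
  using no_4_cycle[of "[a, b, c, d]"] no_loop by (auto simp: closed_walk_def)

lemma no_closed_walk_5: "E a b \<Longrightarrow> E b c \<Longrightarrow> E c d \<Longrightarrow> E d e \<Longrightarrow> E e a \<Longrightarrow> False"
  using no_short_odd_closed_walk[of "[a, b, c, d, e]"] by (simp add: closed_walk_def)

lemma no_closed_walk_7:
  "E a b \<Longrightarrow> E b c \<Longrightarrow> E c d \<Longrightarrow> E d e \<Longrightarrow> E e f \<Longrightarrow> E f g \<Longrightarrow> E g a \<Longrightarrow> False"
  using no_short_odd_closed_walk[of "[a, b, c, d, e, f, g]"] by (simp add: closed_walk_def)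

end

section \<open>Leaves, supports and type-0 vertices\<close>

context graph
begin

abbreviation U :: "'a set" where "U \<equiv> U_set V E"

text \<open>The vertices of positive type.\<close>
definition is_support :: "'a \<Rightarrow> bool" where
  "is_support v \<longleftrightarrow> is_internal V E v \<and> (\<exists>l. is_leaf V E l \<and> E v l)"

lemma symp_E: "symp E"
  using edge_sym by (blast intro: sympI)

lemma component_closed:
  assumes "\<And>y z. y \<in> A \<Longrightarrow> E y z \<Longrightarrow> z \<in> A" "v \<in> A"
  shows "component E v \<subseteq> A"
proof
  fix w assume "w \<in> component E v"
  then have "E\<^sup>*\<^sup>* v w" unfolding component_def by simp
  then show "w \<in> A" by induction (use assms in auto)
qed

lemma U_set_rtranclp_iff: "E\<^sup>*\<^sup>* a b \<Longrightarrow> a \<in> U \<longleftrightarrow> b \<in> U"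
proof (induction rule: rtranclp_induct)
  case (step b c)
  have "component E b = component E c"
    using step(2) sympD[OF symp_rtranclp[OF symp_E]] unfolding component_def
    by (auto intro: rtranclp_trans)
  then show ?case
    using step edge_in_V unfolding U_set_def by auto
qed simp

lemma U_set_edge_iff: "E a b \<Longrightarrow> a \<in> U \<longleftrightarrow> b \<in> U"
  using U_set_rtranclp_iff by blast

lemma deg_GU_eq_card: "v \<notin> U \<Longrightarrow> deg_GU V E v = card {u. E v u}"
  unfolding deg_GU_def using U_set_edge_iff edge_in_V by (metis DiffI)

lemma leaf_unique_neighbour:
  assumes "is_leaf V E l"
  obtains s where "{u. E l u} = {s}"
  using assms deg_GU_eq_card card_1_singletonE unfolding is_leaf_def by (metis DiffD2)

lemma leaf_neighbour_is_support:
  assumes leaf: "is_leaf V E l" and "E l s"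
  shows "is_support s"
proof -
  obtain s' where nbrs_l: "{u. E l u} = {s'}" using leaf by (rule leaf_unique_neighbour)
  with \<open>E l s\<close> have "s' = s" by auto
  have l: "l \<in> V" "l \<notin> U" using leaf unfolding is_leaf_def by auto
  then have s: "s \<in> V" "s \<notin> U" using \<open>E l s\<close> U_set_edge_iff edge_in_V by blast+
  have "\<not> is_leaf V E s"
  proof
    assume "is_leaf V E s"
    then obtain t where "{u. E s u} = {t}" by (rule leaf_unique_neighbour)
    moreover have "E s l" using \<open>E l s\<close> by (rule edge_sym)
    ultimately have "{u. E s u} = {l}" by auto
    then have "component E l \<subseteq> {l, s}"
      using nbrs_l \<open>s' = s\<close> by (intro component_closed) auto
    then have "l \<in> U"
      using l(1) \<open>E l s\<close> edge_sym unfolding U_set_def by blast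
    with l(2) show False ..
  qed
  then show ?thesis
    using s \<open>E l s\<close> leaf edge_sym unfolding is_support_def is_internal_def is_leaf_def by blast
qed

lemma V0_iff:
  "v \<in> V0 V E \<longleftrightarrow> v \<in> U \<or> is_internal V E v \<and> (\<forall>l. E v l \<longrightarrow> \<not> is_leaf V E l)"
proof -
  have "finite {u \<in> V - U. E v u \<and> is_leaf V E u}"
    using finite_V by simp
  moreover have "U \<subseteq> V" "is_internal V E v \<Longrightarrow> v \<in> V"
    unfolding U_set_def is_internal_def by auto
  ultimately show ?thesis
    unfolding V0_def has_type_def is_leaf_def by auto
qed

lemma vertex_type_cases: "v \<in> V \<Longrightarrow> is_leaf V E v \<or> v \<in> V0 V E \<or> is_support v"
  unfolding V0_iff is_support_def is_internal_def is_leaf_def by blast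

lemma leaf_not_V0: "is_leaf V E l \<Longrightarrow> l \<notin> V0 V E"
  unfolding V0_iff is_internal_def is_leaf_def by auto

lemma V0_neighbour_not_leaf: "v \<in> V0 V E \<Longrightarrow> E v l \<Longrightarrow> \<not> is_leaf V E l"
  unfolding V0_iff is_leaf_def using U_set_edge_iff by blast

lemma support_not_V0: "is_support v \<Longrightarrow> v \<notin> V0 V E"
  unfolding is_support_def using V0_neighbour_not_leaf by blast

lemma leaf_V0_not_adjacent: "is_leaf V E l \<Longrightarrow> v \<in> V0 V E \<Longrightarrow> \<not> E l v \<and> \<not> E v l"
  using V0_neighbour_not_leaf edge_sym by blast

lemma leaves_not_adjacent: "is_leaf V E l \<Longrightarrow> is_leaf V E l' \<Longrightarrow> \<not> E l l'"
  using leaf_neighbour_is_support unfolding is_support_def is_internal_def is_leaf_def by blast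

lemma V0_neighbour_cases: "v \<in> V0 V E \<Longrightarrow> E v w \<Longrightarrow> w \<in> V0 V E \<or> is_support w"
  using vertex_type_cases V0_neighbour_not_leaf edge_in_V by blast

lemma V0_second_neighbour:
  assumes "v \<in> V0 V E" "v \<notin> U" "E v p"
  obtains w where "E v w" "w \<noteq> p"
proof (rule ccontr)
  assume "\<not> thesis"
  with that \<open>E v p\<close> have "{u. E v u} = {p}" by blast
  then have "deg_GU V E v = 1" using deg_GU_eq_card assms(2) by simp
  with assms(1,2) show False unfolding V0_iff is_internal_def by simp
qed

lemma card_supports_plus_card_free_leaves_le:
  assumes "T \<subseteq> {v. is_support v}"
  shows "card T + card {l. is_leaf V E l \<and> (\<forall>t\<in>T. \<not> E l t)} \<le> card {l. is_leaf V E l}"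
proof -
  define leaf_of where "leaf_of t = (SOME l. is_leaf V E l \<and> E t l)" for t
  have leaf_of: "is_leaf V E (leaf_of t) \<and> E t (leaf_of t)" if "t \<in> T" for t
  proof -
    have "\<exists>l. is_leaf V E l \<and> E t l" using assms that unfolding is_support_def by blast
    then show ?thesis unfolding leaf_of_def by (rule someI_ex)
  qed
  have "inj_on leaf_of T"
  proof (rule inj_onI)
    fix a b assume "a \<in> T" "b \<in> T" "leaf_of a = leaf_of b"
    moreover obtain s where "{u. E (leaf_of a) u} = {s}"
      using leaf_of[OF \<open>a \<in> T\<close>] leaf_unique_neighbour by blast
    ultimately show "a = b" using leaf_of edge_sym by (metis mem_Collect_eq singletonD)
  qed
  moreover have "leaf_of ` T \<subseteq> {l. is_leaf V E l \<and> (\<exists>t\<in>T. E l t)}"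
    using leaf_of edge_sym by blast
  moreover have "finite {l. is_leaf V E l}"
    using finite_V by (rule rev_finite_subset) (auto simp: is_leaf_def)
  ultimately have "card T \<le> card {l. is_leaf V E l \<and> (\<exists>t\<in>T. E l t)}"
    by (metis (no_types, lifting) card_inj_on_le mem_Collect_eq rev_finite_subset subsetI)
  moreover have "card {l. is_leaf V E l \<and> (\<exists>t\<in>T. E l t)} + card {l. is_leaf V E l \<and> (\<forall>t\<in>T. \<not> E l t)}
      = card {l. is_leaf V E l}"
    using \<open>finite {l. is_leaf V E l}\<close>
    by (subst card_Un_disjoint[symmetric]) (auto intro: arg_cong[of _ _ card])
  ultimately show ?thesis by linarith
qed

lemma rtranclp_E0_imp_rtranclp: "(E0 V E)\<^sup>*\<^sup>* a b \<Longrightarrow> E\<^sup>*\<^sup>* a b"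
  by (induction rule: rtranclp_induct) (auto simp: E0_def intro: rtranclp.rtrancl_into_rtrancl)

lemma component_E0_subset_V0: "x \<in> V0 V E \<Longrightarrow> component (E0 V E) x \<subseteq> V0 V E"
proof
  fix y assume "x \<in> V0 V E" "y \<in> component (E0 V E) x"
  then show "y \<in> V0 V E"
    unfolding component_def by (auto elim: rtranclp_induct simp: E0_def)
qed

lemma component_E0_subset_V: "x \<in> V0 V E \<Longrightarrow> component (E0 V E) x \<subseteq> V"
  using component_E0_subset_V0 unfolding V0_def by blast

lemma component_E0_closed:
  assumes "x \<in> V0 V E" "c \<in> component (E0 V E) x" "v \<in> V0 V E" "E c v"
  shows "v \<in> component (E0 V E) x"
proof -
  have "E0 V E c v" using assms component_E0_subset_V0 unfolding E0_def by blast
  with assms(2) show ?thesis unfolding component_def by (simp add: rtranclp.rtrancl_into_rtrancl)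
qed

lemma component_E0_U_iff: "c \<in> component (E0 V E) x \<Longrightarrow> c \<in> U \<longleftrightarrow> x \<in> U"
  unfolding component_def using U_set_rtranclp_iff rtranclp_E0_imp_rtranclp by blast

lemma finite_component_E0: "x \<in> V0 V E \<Longrightarrow> finite (component (E0 V E) x)"
  using component_E0_subset_V0 finite_V unfolding V0_def by (blast intro: finite_subset)

end

section \<open>Connected graphs of maximum degree two\<close>

lemma cycle_adj_iff:
  "i < n \<Longrightarrow> j < n \<Longrightarrow> cycle_adj n i j \<longleftrightarrow> path_adj i j \<or> i = 0 \<and> j = n - 1 \<or> i = n - 1 \<and> j = 0"
  unfolding cycle_adj_def path_adj_def by (cases "Suc i = n"; cases "Suc j = n") auto

context graph
begin

definition path_in :: "'a set \<Rightarrow> 'a list \<Rightarrow> bool" where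
  "path_in C xs \<longleftrightarrow> distinct xs \<and> set xs \<subseteq> C \<and> successively E xs"

lemma degree_le_2_no_three_neighbours:
  assumes "finite C" "\<And>u. u \<in> C \<Longrightarrow> card {v \<in> C. E u v} \<le> 2"
    and "u \<in> C" "a \<in> C" "b \<in> C" "c \<in> C" "E u a" "E u b" "E u c"
  shows "a = b \<or> a = c \<or> b = c"
proof (rule ccontr)
  assume "\<not> ?thesis"
  then have "card {a, b, c} = 3" by simp
  moreover have "card {a, b, c} \<le> card {v \<in> C. E u v}"
    using assms by (intro card_mono) auto
  ultimately show False using assms(2)[OF \<open>u \<in> C\<close>] by simp
qed

lemma longest_path_contains_neighbours:
  assumes fin: "finite C" and deg: "\<And>u. u \<in> C \<Longrightarrow> card {v \<in> C. E u v} \<le> 2"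
    and path: "path_in C xs" "x \<in> set xs"
    and longest: "\<And>ys. path_in C ys \<Longrightarrow> x \<in> set ys \<Longrightarrow> length ys \<le> length xs"
    and "v \<in> set xs" "w \<in> C" "E v w"
  shows "w \<in> set xs"
proof (rule ccontr)
  assume w: "w \<notin> set xs"
  obtain as bs where xs: "xs = as @ v # bs" using split_list[OF \<open>v \<in> set xs\<close>] by blast
  have succ: "successively E (as @ v # bs)" using path xs unfolding path_in_def by simp
  consider "as = []" | "bs = []" | "as \<noteq> []" "bs \<noteq> []" by blast
  then show False
  proof cases
    case 1
    then have "path_in C (w # xs)"
      using path w \<open>w \<in> C\<close> \<open>E v w\<close> edge_sym xs unfolding path_in_def by (auto simp: successively_Cons)
    then show False using longest[of "w # xs"] path(2) by simp
  next
    case 2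
    then have "path_in C (xs @ [w])"
      using path w \<open>w \<in> C\<close> \<open>E v w\<close> xs unfolding path_in_def by (auto simp: successively_append_iff)
    then show False using longest[of "xs @ [w]"] path(2) by simp
  next
    case 3
    have neighbours: "E v (last as)" "E v (hd bs)"
      using succ 3 edge_sym by (auto simp: successively_append_iff successively_Cons)
    have "last as \<in> set as" "hd bs \<in> set bs" using 3 by auto
    then have "last as \<in> set xs" "hd bs \<in> set xs" "last as \<noteq> hd bs"
      using xs path unfolding path_in_def by auto
    then show False
      using degree_le_2_no_three_neighbours[OF fin deg, of v "last as" "hd bs" w] neighbours
        w \<open>w \<in> C\<close> \<open>E v w\<close> \<open>v \<in> set xs\<close> path(1) unfolding path_in_def by blast
  qed
qed

lemma path_chord_joins_endpoints:
  assumes fin: "finite C" and deg: "\<And>u. u \<in> C \<Longrightarrow> card {v \<in> C. E u v} \<le> 2"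
    and path: "path_in C xs" and ij: "i < j" "j < length xs" and chord: "E (xs ! i) (xs ! j)"
  shows "j = Suc i \<or> i = 0 \<and> j = length xs - 1"
proof (rule ccontr)
  assume not_path_edge: "\<not> ?thesis"
  have step: "E (xs ! k) (xs ! Suc k)" "E (xs ! Suc k) (xs ! k)" if "Suc k < length xs" for k
    using path that successively_nth edge_sym unfolding path_in_def by blast+
  have in_C: "xs ! k \<in> C" if "k < length xs" for k
    using path that nth_mem unfolding path_in_def by blast
  have distinct: "xs ! k \<noteq> xs ! l" if "k < length xs" "l < length xs" "k \<noteq> l" for k l
    using path that nth_eq_iff_index_eq unfolding path_in_def by blast
  have three_neighbours: False
    if "a < length xs" "b < length xs" "c < length xs" "d < length xs"
      "E (xs ! a) (xs ! b)" "E (xs ! a) (xs ! c)" "E (xs ! a) (xs ! d)" "b \<noteq> c" "b \<noteq> d" "c \<noteq> d"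
    for a b c d
    using degree_le_2_no_three_neighbours[OF fin deg in_C[of a] in_C[of b] in_C[of c] in_C[of d]]
      distinct that by blast
  show False
  proof (cases i)
    case (Suc h)
    then show False
      using three_neighbours[of i h "Suc i" j] step[of h] step[of i] chord ij not_path_edge by auto
  next
    case 0
    then obtain h where h: "j = Suc h" "0 < h" "Suc j < length xs"
      using ij not_path_edge by (cases j) auto
    moreover have "E (xs ! j) (xs ! i)" using chord by (rule edge_sym)
    ultimately show False
      using three_neighbours[of j h "Suc j" i] step[of h] step[of j] ij 0 by fastforce
  qed
qed

lemma spanning_path_is_path_or_cycle:
  assumes path: "path_in C xs" "set xs = C"
    and chords: "\<And>i j. i < j \<Longrightarrow> j < length xs \<Longrightarrow> E (xs ! i) (xs ! j) \<Longrightarrow>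
      j = Suc i \<or> i = 0 \<and> j = length xs - 1"
  shows "(\<exists>n. induced_iso_path E C n) \<or> (\<exists>n\<ge>3. induced_iso_cycle E C n)"
proof -
  define n where "n = length xs"
  define closing where "closing \<longleftrightarrow> 3 \<le> n \<and> E (xs ! 0) (xs ! (n - 1))"
  have bij: "bij_betw ((!) xs) {0..<n} C"
    using path bij_betw_nth[of xs "{0..<n}" C] unfolding path_in_def n_def by (simp add: atLeast0LessThan)
  have ordered: "E (xs ! i) (xs ! j) \<longleftrightarrow> j = Suc i \<or> closing \<and> i = 0 \<and> j = n - 1"
    if "i < j" "j < n" for i j
    using that chords[of i j] successively_nth[of E xs i] path(1)
    unfolding closing_def n_def path_in_def by auto
  have adj: "E (xs ! i) (xs ! j) \<longleftrightarrow>
      path_adj i j \<or> closing \<and> (i = 0 \<and> j = n - 1 \<or> i = n - 1 \<and> j = 0)"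
    if "i < n" "j < n" for i j
  proof -
    consider "i < j" | "i = j" | "j < i" by linarith
    then show ?thesis
      using ordered[of i j] ordered[of j i] that edge_sym no_loop
      unfolding path_adj_def closing_def by cases (blast, auto)
  qed
  show ?thesis
  proof (cases closing)
    case False
    then have "induced_iso_path E C n"
      unfolding induced_iso_path_def using bij adj by blast
    then show ?thesis by blast
  next
    case True
    then have "induced_iso_cycle E C n"
      unfolding induced_iso_cycle_def using bij adj cycle_adj_iff by blast
    then show ?thesis using True unfolding closing_def by blast
  qed
qed

lemma component_path_or_cycle_if_degree_le_2:
  assumes sub: "\<And>a b. R a b \<Longrightarrow> E a b" and fin: "finite (component R x)"
    and deg: "\<And>u. u \<in> component R x \<Longrightarrow> card {v \<in> component R x. E u v} \<le> 2"
  shows "(\<exists>n. induced_iso_path E (component R x) n) \<or>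
    (\<exists>n\<ge>3. induced_iso_cycle E (component R x) n)"
proof -
  define C where "C = component R x"
  have "x \<in> C" unfolding C_def component_def by simp
  then have "path_in C [x]" unfolding path_in_def by simp
  moreover have "length ys < card C + 1" if "path_in C ys" for ys
  proof -
    have "card (set ys) \<le> card C"
      using that fin unfolding path_in_def C_def by (simp add: card_mono)
    then show ?thesis using that distinct_card unfolding path_in_def by fastforce
  qed
  ultimately obtain xs where xs: "path_in C xs" "x \<in> set xs"
    and longest: "\<And>ys. path_in C ys \<Longrightarrow> x \<in> set ys \<Longrightarrow> length ys \<le> length xs"
    using ex_has_greatest_nat[of "\<lambda>ys. path_in C ys \<and> x \<in> set ys" "[x]" length "card C + 1"]
    by auto
  have "C \<subseteq> set xs"
  proof
    fix y assume "y \<in> C"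
    then have "R\<^sup>*\<^sup>* x y" unfolding C_def component_def by simp
    then show "y \<in> set xs"
    proof (induction rule: rtranclp_induct)
      case (step z w)
      moreover have "w \<in> C" using step(1,2) unfolding C_def component_def by simp
      ultimately show ?case
        using longest_path_contains_neighbours[OF fin[folded C_def] deg[folded C_def] xs longest] sub
        by blast
    qed (use xs in simp)
  qed
  then have "set xs = C" using xs unfolding path_in_def by blast
  then show ?thesis
    using spanning_path_is_path_or_cycle[OF xs(1)]
      path_chord_joins_endpoints[OF fin[folded C_def] deg[folded C_def] xs(1)]
    unfolding C_def by blast
qed

lemma has_induced_cycle_if_induced_iso_cycle:
  "induced_iso_cycle E C n \<Longrightarrow> C \<subseteq> V \<Longrightarrow> has_induced_cycle V E n"
  unfolding induced_iso_cycle_def has_induced_cycle_def bij_betw_def by blast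

end

section \<open>Independent sets in almost well-covered graphs\<close>

lemma indep_extends_to_max_indep:
  assumes "finite A" "indep A E I"
  obtains S where "I \<subseteq> S" "max_indep A E S"
proof -
  have "finite {S. indep A E S \<and> I \<subseteq> S}"
    using assms(1) by (rule finite_subset[rotated, OF finite_Pow_iff[THEN iffD2]]) (auto simp: indep_def)
  then obtain S where S: "S \<in> {S. indep A E S \<and> I \<subseteq> S}"
    and maximal: "\<And>S'. S' \<in> {S. indep A E S \<and> I \<subseteq> S} \<Longrightarrow> S \<subseteq> S' \<Longrightarrow> S = S'"
    using finite_has_maximal2[of _ I] assms(2) by (metis (no_types, lifting) mem_Collect_eq order_refl)
  have "max_indep A E S"
    unfolding max_indep_def
  proof (intro conjI ballI notI)
    show "indep A E S" using S by simp
    fix v assume "v \<in> A - S" "indep A E (insert v S)"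
    then show False using maximal[of "insert v S"] S by blast
  qed
  with S show ?thesis using that by blast
qed

context graph
begin

lemma max_indep_dominates:
  assumes "max_indep A E S" "v \<in> A - S"
  shows "\<exists>s\<in>S. E v s"
proof -
  have "\<not> indep A E (insert v S)" "S \<subseteq> A" "\<forall>a\<in>S. \<forall>b\<in>S. \<not> E a b"
    using assms unfolding max_indep_def indep_def by auto
  then show ?thesis
    using assms(2) no_loop edge_sym unfolding indep_def by blast
qed

lemma finite_indep_sets: "finite {S. indep V E S}"
  using finite_V by (rule finite_subset[rotated, OF finite_Pow_iff[THEN iffD2]]) (auto simp: indep_def)

lemma card_le_alpha: "indep V E S \<Longrightarrow> card S \<le> alpha V E"
  unfolding alpha_def using finite_indep_sets by (auto intro: Max_ge)

lemma indep_dom_le_card: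
  assumes "max_indep V E S"
  shows "indep_dom V E \<le> card S"
proof -
  have "finite {S. max_indep V E S}"
    using finite_indep_sets by (rule rev_finite_subset) (auto simp: max_indep_def)
  then show ?thesis
    unfolding indep_dom_def using assms by (auto intro: Min_le)
qed

lemma small_max_indep_extension:
  assumes C: "C \<subseteq> V0 V E" "\<And>c v. c \<in> C \<Longrightarrow> v \<in> V0 V E \<Longrightarrow> E c v \<Longrightarrow> v \<in> C"
    and T: "T \<subseteq> {v. is_support v}" "indep V E T"
    and M: "indep V E M" "M \<subseteq> C" "\<forall>m\<in>M. \<forall>t\<in>T. \<not> E m t"
      "\<And>c. c \<in> C \<Longrightarrow> \<forall>t\<in>T. \<not> E c t \<Longrightarrow> c \<in> M \<or> (\<exists>m\<in>M. E c m)"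
  obtains S where "max_indep V E S"
    "card S \<le> card {l. is_leaf V E l} + card M + card (S \<inter> (V0 V E - C))"
proof -
  define LT where "LT = {l. is_leaf V E l \<and> (\<forall>t\<in>T. \<not> E l t)}"
  have "indep V E (T \<union> LT \<union> M)"
    using T(2) M(1,2,3) C(1) leaves_not_adjacent leaf_V0_not_adjacent edge_sym
    unfolding indep_def LT_def is_leaf_def by blast
  then obtain S where "T \<union> LT \<union> M \<subseteq> S" and S: "max_indep V E S"
    using finite_V indep_extends_to_max_indep by blast
  then have S_indep: "\<And>a b. a \<in> S \<Longrightarrow> b \<in> S \<Longrightarrow> \<not> E a b"
    unfolding max_indep_def indep_def by blast
  have "S \<subseteq> T \<union> LT \<union> M \<union> (S \<inter> (V0 V E - C))"
  proof
    fix v assume v: "v \<in> S"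
    then have "v \<in> V" using S unfolding max_indep_def indep_def by blast
    then consider "is_leaf V E v" | "is_support v" | "v \<in> V0 V E" using vertex_type_cases by blast
    then show "v \<in> T \<union> LT \<union> M \<union> (S \<inter> (V0 V E - C))"
    proof cases
      case 1
      then show ?thesis
        using v S_indep \<open>T \<union> LT \<union> M \<subseteq> S\<close> unfolding LT_def by blast
    next
      case 2
      then obtain l where l: "is_leaf V E l" "E v l" unfolding is_support_def by blast
      obtain s where "{u. E l u} = {s}" using l(1) by (rule leaf_unique_neighbour)
      moreover have "E l v" using l(2) by (rule edge_sym)
      ultimately have "\<forall>t. E l t \<longrightarrow> t = v" by (metis mem_Collect_eq singletonD)
      then have "v \<in> T \<or> l \<in> LT" using l(1) unfolding LT_def by auto
      then show ?thesis using v l S_indep \<open>T \<union> LT \<union> M \<subseteq> S\<close> by blast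
    next
      case 3
      then show ?thesis using v M(4) S_indep \<open>T \<union> LT \<union> M \<subseteq> S\<close> by blast
    qed
  qed
  moreover have "finite (T \<union> LT \<union> M \<union> (S \<inter> (V0 V E - C)))"
    using S finite_V \<open>T \<union> LT \<union> M \<subseteq> S\<close> unfolding max_indep_def indep_def
    by (meson finite_subset le_sup_iff inf_le1)
  ultimately have "card S \<le> card (T \<union> LT \<union> M \<union> (S \<inter> (V0 V E - C)))"
    by (rule card_mono[rotated])
  also have "\<dots> \<le> card T + card LT + card M + card (S \<inter> (V0 V E - C))"
    using card_Un_le[of "T \<union> LT \<union> M" "S \<inter> (V0 V E - C)"] card_Un_le[of "T \<union> LT" M] card_Un_le[of T LT]
    by linarith
  finally have "card S \<le> card T + card LT + card M + card (S \<inter> (V0 V E - C))" .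
  moreover have "card T + card LT \<le> card {l. is_leaf V E l}"
    unfolding LT_def by (rule card_supports_plus_card_free_leaves_le[OF T(1)])
  ultimately show ?thesis by (intro that[OF S]) linarith
qed

end

locale awc_graph = graph +
  assumes awc: "almost_well_covered V E"
begin

lemma card_indep_le_card_max_indep_plus_1:
  "indep V E I \<Longrightarrow> max_indep V E S \<Longrightarrow> card I \<le> card S + 1"
  using awc card_le_alpha[of I] indep_dom_le_card[of S] unfolding almost_well_covered_def by linarith

lemma card_indep_le_card_dominating_plus_1:
  assumes C: "C \<subseteq> V0 V E" "\<And>c v. c \<in> C \<Longrightarrow> v \<in> V0 V E \<Longrightarrow> E c v \<Longrightarrow> v \<in> C"
    and T: "T \<subseteq> {v. is_support v}" "indep V E T"
    and M: "indep V E M" "M \<subseteq> C" "\<forall>m\<in>M. \<forall>t\<in>T. \<not> E m t"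
      "\<And>c. c \<in> C \<Longrightarrow> \<forall>t\<in>T. \<not> E c t \<Longrightarrow> c \<in> M \<or> (\<exists>m\<in>M. E c m)"
    and J: "indep V E J" "J \<subseteq> C"
  shows "card J \<le> card M + 1"
proof -
  obtain S where S: "max_indep V E S"
    and card_S: "card S \<le> card {l. is_leaf V E l} + card M + card (S \<inter> (V0 V E - C))"
    by (rule small_max_indep_extension[of C T M]) (use C T M in blast)+
  define I where "I = {l. is_leaf V E l} \<union> J \<union> (S \<inter> (V0 V E - C))"
  have "indep V E I"
    using J S C leaves_not_adjacent leaf_V0_not_adjacent edge_sym
    unfolding I_def indep_def max_indep_def is_leaf_def by blast
  moreover have "card I = card {l. is_leaf V E l} + card J + card (S \<inter> (V0 V E - C))"
  proof -
    have "finite I" using \<open>indep V E I\<close> finite_V unfolding indep_def by (blast intro: finite_subset)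
    moreover have "{l. is_leaf V E l} \<inter> J = {}" "({l. is_leaf V E l} \<union> J) \<inter> (S \<inter> (V0 V E - C)) = {}"
      using J(2) C(1) leaf_not_V0 by blast+
    ultimately show ?thesis
      unfolding I_def by (simp add: card_Un_disjoint)
  qed
  ultimately show ?thesis
    using card_indep_le_card_max_indep_plus_1[OF _ S] card_S by fastforce
qed

end

section \<open>Paths and cycles in \<open>G\<^sub>0\<close>\<close>

text \<open>The indices 1, 4, 7, \<dots>, capped at \<open>n - 1\<close>, index an independent dominating set of
  \<open>P\<^sub>n\<close> and of \<open>C\<^sub>n\<close>.\<close>
definition third_index :: "nat \<Rightarrow> nat \<Rightarrow> nat" where
  "third_index n k = min (3 * k + 1) (n - 1)"

lemma third_index_less: "k < (n + 2) div 3 \<Longrightarrow> third_index n k < n"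
  unfolding third_index_def by auto

lemma third_index_not_consecutive:
  "k < (n + 2) div 3 \<Longrightarrow> k' < (n + 2) div 3 \<Longrightarrow> third_index n k' \<noteq> Suc (third_index n k)"
  unfolding third_index_def min_def by presburger

lemma third_indices_not_adjacent:
  assumes "i \<in> third_index n ` {..<(n + 2) div 3}" "j \<in> third_index n ` {..<(n + 2) div 3}" "i \<noteq> j"
  shows "\<not> (j = Suc i \<or> i = Suc j \<or> i = 0 \<or> j = 0)"
proof -
  obtain k k' where "k < (n + 2) div 3" "k' < (n + 2) div 3" "i = third_index n k" "j = third_index n k'"
    using assms(1,2) by blast
  moreover have "2 \<le> n"
    using assms(3) calculation third_index_less[of k n] third_index_less[of k' n] by linarith
  ultimately show ?thesis
    using third_index_not_consecutive[of k n k'] third_index_not_consecutive[of k' n k]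
    unfolding third_index_def by auto
qed

lemma third_index_near:
  assumes "i < n"
  shows "\<exists>k < (n + 2) div 3. third_index n k = i \<or> third_index n k = Suc i \<or> i = Suc (third_index n k)"
proof (intro exI conjI)
  show "i div 3 < (n + 2) div 3" using assms by linarith
  show "third_index n (i div 3) = i \<or> third_index n (i div 3) = Suc i \<or> i = Suc (third_index n (i div 3))"
    using assms unfolding third_index_def min_def by presburger
qed

context awc_graph
begin

lemma card_independent_indices_le:
  assumes x: "x \<in> V0 V E" and bij: "bij_betw f {0..<n} (component (E0 V E) x)"
    and steps: "\<And>i. Suc i < n \<Longrightarrow> E (f i) (f (Suc i))"
    and chords: "\<And>i j. i < n \<Longrightarrow> j < n \<Longrightarrow> E (f i) (f j) \<Longrightarrow> j = Suc i \<or> i = Suc j \<or> i = 0 \<or> j = 0"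
    and A: "A \<subseteq> {..<n}" "indep V E (f ` A)"
  shows "card A \<le> (n + 2) div 3 + 1"
proof -
  define C where "C = component (E0 V E) x"
  define B where "B = third_index n ` {..<(n + 2) div 3}"
  have C_V: "C \<subseteq> V" using component_E0_subset_V0[OF x] unfolding C_def V0_def by blast
  have B: "B \<subseteq> {..<n}" unfolding B_def using third_index_less by blast
  have f_C: "f ` {..<n} = C" using bij unfolding bij_betw_def C_def atLeast0LessThan by simp
  have "card (f ` A) \<le> card (f ` B) + 1"
  proof (rule card_indep_le_card_dominating_plus_1[where T = "{}"])
    show "C \<subseteq> V0 V E" unfolding C_def by (rule component_E0_subset_V0[OF x])
    show "v \<in> C" if "c \<in> C" "v \<in> V0 V E" "E c v" for c v
      using component_E0_closed[OF x] that unfolding C_def by blast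
    show "indep V E (f ` B)"
    proof -
      have "\<not> E (f i) (f j)" if "i \<in> B" "j \<in> B" for i j
        using that B chords[of i j] no_loop third_indices_not_adjacent[of i n j]
        unfolding B_def by (cases "i = j") auto
      then show ?thesis using B f_C C_V unfolding indep_def by blast
    qed
    show "f ` B \<subseteq> C" using B f_C by blast
    show "c \<in> f ` B \<or> (\<exists>m\<in>f ` B. E c m)" if "c \<in> C" "\<forall>t\<in>{}. \<not> E c t" for c
    proof -
      obtain i where "i < n" "c = f i" using \<open>c \<in> C\<close> f_C by blast
      moreover obtain k where k: "k < (n + 2) div 3"
        and "third_index n k = i \<or> third_index n k = Suc i \<or> i = Suc (third_index n k)"
        using third_index_near[OF \<open>i < n\<close>] by blast
      moreover have "f (third_index n k) \<in> f ` B" "third_index n k < n"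
        using k unfolding B_def using third_index_less by auto
      ultimately show ?thesis
        using steps[of i] steps[of "third_index n k"] edge_sym \<open>c = f i\<close> by (metis lessI)
    qed
    show "f ` A \<subseteq> C" using A(1) f_C by blast
  qed (use A(2) in \<open>auto simp: indep_def\<close>)
  moreover have "card (f ` A) = card A"
    using A(1) bij by (intro card_image) (auto simp: bij_betw_def atLeast0LessThan intro: inj_on_subset)
  moreover have "card (f ` B) \<le> (n + 2) div 3"
    using card_image_le[of B f] card_image_le[of "{..<(n + 2) div 3}" "third_index n"]
    unfolding B_def by simp
  ultimately show ?thesis by linarith
qed

lemma card_even_indices_le:
  assumes x: "x \<in> V0 V E" and bij: "bij_betw f {0..<n} (component (E0 V E) x)"
    and adj: "\<And>i j. i < n \<Longrightarrow> j < n \<Longrightarrow>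
      E (f i) (f j) \<longleftrightarrow> path_adj i j \<or> closed \<and> (i = 0 \<and> j = n - 1 \<or> i = n - 1 \<and> j = 0)"
    and m: "2 * m \<le> n + 1" "closed \<Longrightarrow> 2 * m \<le> n"
  shows "m \<le> (n + 2) div 3 + 1"
proof -
  define A where "A = (\<lambda>k. 2 * k) ` {..<m}"
  have A: "A \<subseteq> {..<n}" using m(1) unfolding A_def by auto
  have "card A \<le> (n + 2) div 3 + 1"
  proof (rule card_independent_indices_le[OF x bij _ _ A])
    show "E (f i) (f (Suc i))" if "Suc i < n" for i
      using adj[of i "Suc i"] that unfolding path_adj_def by simp
    show "j = Suc i \<or> i = Suc j \<or> i = 0 \<or> j = 0" if "i < n" "j < n" "E (f i) (f j)" for i j
      using adj that unfolding path_adj_def by blast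
    have "\<not> E (f i) (f j)" if "i \<in> A" "j \<in> A" for i j
      using that A adj[of i j] m unfolding A_def path_adj_def by auto presburger+
    then show "indep V E (f ` A)"
      using A bij component_E0_subset_V[OF x] unfolding indep_def bij_betw_def atLeast0LessThan by blast
  qed
  moreover have "card A = m"
    unfolding A_def by (simp add: card_image inj_on_def)
  ultimately show ?thesis by simp
qed

lemma path_component_length:
  assumes x: "x \<in> V0 V E" and "induced_iso_path E (component (E0 V E) x) n"
  shows "(n + 1) div 2 \<le> (n + 2) div 3 + 1"
proof -
  obtain f where "bij_betw f {0..<n} (component (E0 V E) x)"
    and "\<And>i j. i < n \<Longrightarrow> j < n \<Longrightarrow> E (f i) (f j) \<longleftrightarrow> path_adj i j"
    using assms(2) unfolding induced_iso_path_def by blast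
  then show ?thesis by (intro card_even_indices_le[OF x, where closed = False]) auto
qed

lemma cycle_component_length:
  assumes x: "x \<in> V0 V E" and "induced_iso_cycle E (component (E0 V E) x) n"
  shows "n div 2 \<le> (n + 2) div 3 + 1"
proof -
  obtain f where "bij_betw f {0..<n} (component (E0 V E) x)"
    and "\<And>i j. i < n \<Longrightarrow> j < n \<Longrightarrow> E (f i) (f j) \<longleftrightarrow> cycle_adj n i j"
    using assms(2) unfolding induced_iso_cycle_def by blast
  then show ?thesis by (intro card_even_indices_le[OF x, where closed = True]) (auto simp: cycle_adj_iff)
qed

end

section \<open>Vertices of degree three in \<open>G\<^sub>0\<close>\<close>

locale awc_C3457_free_graph = awc_graph V E + C3457_free_graph V E for V E
begin

context
  fixes x u :: 'a
begin

abbreviation C :: "'a set" where "C \<equiv> component (E0 V E) x"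

definition nbhd :: "'a set" where "nbhd = {p \<in> C. E u p}"

definition nbhd2 :: "'a set" where "nbhd2 = {y \<in> C - insert u nbhd. \<exists>p\<in>nbhd. E p y}"

definition nbhd2_supports :: "'a set" where
  "nbhd2_supports = {z. is_support z \<and> (\<exists>y\<in>nbhd2. E z y)}"

definition outer :: "'a set" where
  "outer = C - insert u (nbhd \<union> nbhd2) - {w. \<exists>z\<in>nbhd2_supports. E w z}"

definition outer_boundary :: "'a set" where
  "outer_boundary = {w \<in> outer. \<exists>y\<in>nbhd2. E y w}"

context
  assumes x: "x \<in> V0 V E" and u: "u \<in> C" and u_not_U: "u \<notin> U"
begin

lemma nbhd2_walk:
  assumes "y \<in> nbhd2"
  obtains p where "E u p" "E p y" "p \<in> C" "y \<in> C" "y \<noteq> u" "\<not> E u y"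
  using assms unfolding nbhd2_def nbhd_def by blast

lemma nbhd_indep: "indep V E nbhd"
  using no_triangle component_E0_subset_V[OF x] edge_sym unfolding indep_def nbhd_def by blast

lemma no_path_3_between_nbhd2:
  assumes "y1 \<in> nbhd2" "y2 \<in> nbhd2" "E y1 a" "E a b" "E b y2"
  shows False
proof -
  obtain p1 p2 where "E u p1" "E p1 y1" "E u p2" "E p2 y2"
    using nbhd2_walk[OF assms(1)] nbhd2_walk[OF assms(2)] by metis
  then show False
    using no_closed_walk_7[of u p1 y1 a b y2 p2] assms(3-5) edge_sym[of p2 y2] edge_sym[of u p2]
    by blast
qed

lemma nbhd2_supports_indep: "indep V E nbhd2_supports"
  using no_path_3_between_nbhd2 edge_in_V edge_sym unfolding indep_def nbhd2_supports_def by blast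

lemma outer_boundary_indep: "indep V E outer_boundary"
  using no_path_3_between_nbhd2 component_E0_subset_V[OF x] edge_sym
  unfolding indep_def outer_boundary_def outer_def by blast

lemma not_adjacent_nbhd2_supports: "z \<in> nbhd2_supports \<Longrightarrow> \<not> E u z"
proof
  assume "z \<in> nbhd2_supports" "E u z"
  then obtain y where "y \<in> nbhd2" "E y z" "is_support z"
    using edge_sym unfolding nbhd2_supports_def by blast
  from \<open>y \<in> nbhd2\<close> obtain p where "E u p" "E p y" "y \<noteq> u" "p \<in> C"
    by (rule nbhd2_walk)
  moreover have "p \<noteq> z"
    using \<open>p \<in> C\<close> \<open>is_support z\<close> component_E0_subset_V0[OF x] support_not_V0 by blast
  moreover have "E z u" using \<open>E u z\<close> by (rule edge_sym)
  ultimately show False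
    using no_square[of u p y z] \<open>E y z\<close> by blast
qed

lemma nbhd2_dominated:
  assumes "outer_boundary \<subseteq> K" "y \<in> nbhd2" "\<forall>z\<in>nbhd2_supports. \<not> E y z"
  shows "\<exists>k\<in>K. E y k"
proof -
  obtain p where p: "E u p" "E p y" and "y \<in> C" "y \<noteq> u" "\<not> E u y"
    using assms(2) by (rule nbhd2_walk)
  have "y \<in> V0 V E" "y \<notin> U"
    using \<open>y \<in> C\<close> component_E0_subset_V0[OF x] component_E0_U_iff u u_not_U by blast+
  moreover have "E y p" using p(2) by (rule edge_sym)
  ultimately obtain w where w: "E y w" "w \<noteq> p" by (rule V0_second_neighbour)
  have "\<not> is_support w"
    using w(1) assms(2,3) edge_sym unfolding nbhd2_supports_def by blast
  then have "w \<in> C"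
    using V0_neighbour_cases[OF \<open>y \<in> V0 V E\<close> w(1)] component_E0_closed[OF x \<open>y \<in> C\<close>] w(1)
    by blast
  have "w \<noteq> u" using \<open>\<not> E u y\<close> w(1) edge_sym by blast
  moreover have "w \<notin> nbhd"
  proof
    assume "w \<in> nbhd"
    then have "E w u" unfolding nbhd_def using edge_sym by blast
    then show False using no_square[of u p y w] p w \<open>y \<noteq> u\<close> by blast
  qed
  moreover have "w \<notin> nbhd2"
  proof
    assume "w \<in> nbhd2"
    then obtain p' where "E u p'" "E p' w" by (rule nbhd2_walk)
    then show False using no_closed_walk_5[of u p y w p'] p w(1) edge_sym[of p' w] edge_sym[of u p'] by blast
  qed
  moreover have "\<not> E w z" if "z \<in> nbhd2_supports" for z
    using that no_path_3_between_nbhd2[OF assms(2), of _ w z] w(1) unfolding nbhd2_supports_def by blast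
  ultimately have "w \<in> outer_boundary"
    using \<open>w \<in> C\<close> assms(2) w(1) unfolding outer_boundary_def outer_def by blast
  then show ?thesis using assms(1) w(1) by blast
qed

lemma outer_max_indep_exists:
  obtains K where "outer_boundary \<subseteq> K" "max_indep outer E K"
proof -
  have "finite outer"
    using finite_component_E0[OF x] unfolding outer_def by simp
  moreover have "indep outer E outer_boundary"
    using outer_boundary_indep unfolding indep_def outer_boundary_def by blast
  ultimately show ?thesis using that by (blast intro: indep_extends_to_max_indep)
qed

lemma insert_u_dominates:
  assumes "outer_boundary \<subseteq> K" "max_indep outer E K"
    and "c \<in> C" "\<forall>t\<in>nbhd2_supports. \<not> E c t"
  shows "c \<in> insert u K \<or> (\<exists>m\<in>insert u K. E c m)"
proof -
  consider "c = u" | "c \<in> nbhd" | "c \<in> nbhd2" | "c \<in> outer"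
    using assms(3,4) unfolding outer_def by blast
  then show ?thesis
  proof cases
    case 2
    then show ?thesis unfolding nbhd_def using edge_sym by blast
  next
    case 3
    then show ?thesis using nbhd2_dominated[OF assms(1) _ assms(4)] by blast
  next
    case 4
    then show ?thesis using max_indep_dominates[OF assms(2)] by blast
  qed simp
qed

lemma card_nbhd_le_2: "card nbhd \<le> 2"
proof -
  obtain K where "outer_boundary \<subseteq> K" and K_max: "max_indep outer E K"
    by (rule outer_max_indep_exists)
  then have K: "K \<subseteq> outer" "\<forall>a\<in>K. \<forall>b\<in>K. \<not> E a b"
    unfolding max_indep_def indep_def by auto
  have outer_C: "outer \<subseteq> C" and outer_nbhd: "outer \<inter> insert u (nbhd \<union> nbhd2) = {}"
    unfolding outer_def by auto
  have u_K: "\<not> E u k \<and> \<not> E k u" if "k \<in> K" for k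
    using that K(1) outer_C outer_nbhd edge_sym unfolding nbhd_def by blast
  have nbhd_K: "\<not> E p k \<and> \<not> E k p" if "p \<in> nbhd" "k \<in> K" for p k
    using that K(1) outer_C outer_nbhd edge_sym unfolding nbhd2_def by blast
  have "card (nbhd \<union> K) \<le> card (insert u K) + 1"
  proof (rule card_indep_le_card_dominating_plus_1)
    show "C \<subseteq> V0 V E" by (rule component_E0_subset_V0[OF x])
    show "v \<in> C" if "c \<in> C" "v \<in> V0 V E" "E c v" for c v
      using component_E0_closed[OF x] that by blast
    show "nbhd2_supports \<subseteq> {v. is_support v}" unfolding nbhd2_supports_def by blast
    show "indep V E nbhd2_supports" by (rule nbhd2_supports_indep)
    show "indep V E (insert u K)"
      using u K u_K outer_C component_E0_subset_V[OF x] no_loop unfolding indep_def by blast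
    show "insert u K \<subseteq> C" using u K(1) outer_C by blast
    show "\<forall>m\<in>insert u K. \<forall>t\<in>nbhd2_supports. \<not> E m t"
      using not_adjacent_nbhd2_supports K(1) unfolding outer_def by blast
    show "c \<in> insert u K \<or> (\<exists>m\<in>insert u K. E c m)"
      if "c \<in> C" "\<forall>t\<in>nbhd2_supports. \<not> E c t" for c
      using insert_u_dominates[OF \<open>outer_boundary \<subseteq> K\<close> K_max that] .
    show "indep V E (nbhd \<union> K)"
      using nbhd_indep K nbhd_K outer_C component_E0_subset_V[OF x] unfolding indep_def by blast
    show "nbhd \<union> K \<subseteq> C" using K(1) outer_C unfolding nbhd_def by blast
  qed
  moreover have "finite K" "finite nbhd"
    using K(1) outer_C finite_component_E0[OF x] unfolding nbhd_def by (auto intro: finite_subset)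
  moreover have "nbhd \<inter> K = {}" "u \<notin> K"
    using K(1) outer_nbhd by blast+
  ultimately show ?thesis by (simp add: card_Un_disjoint)
qed

end

end

lemma component_degree_le_2:
  assumes "x \<in> V0 V E" "u \<in> component (E0 V E) x"
  shows "card {v \<in> component (E0 V E) x. E u v} \<le> 2"
proof (cases "u \<in> U")
  case True
  have "a = b" if "E u a" "E u b" for a b
  proof (rule ccontr)
    assume "a \<noteq> b"
    moreover have "a \<in> component E u" "b \<in> component E u"
      using that unfolding component_def by auto
    ultimately have "E a b" using True unfolding U_set_def by blast
    then show False using no_triangle[of u a b] that edge_sym by blast
  qed
  moreover have "finite {v \<in> component (E0 V E) x. E u v}"
    using finite_component_E0[OF assms(1)] by simp
  ultimately have "card {v \<in> component (E0 V E) x. E u v} \<le> Suc 0"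
    using card_le_Suc0_iff_eq by blast
  then show ?thesis by simp
next
  case False
  then show ?thesis using card_nbhd_le_2[OF assms False] by (simp add: nbhd_def)
qed

lemma V0_component_path_or_cycle:
  assumes "x \<in> V0 V E"
  shows "(\<exists>n. induced_iso_path E (component (E0 V E) x) n) \<or>
    (\<exists>n\<ge>3. induced_iso_cycle E (component (E0 V E) x) n)"
  using component_path_or_cycle_if_degree_le_2[of "E0 V E" x] finite_component_E0[OF assms]
    component_degree_le_2[OF assms] unfolding E0_def by blast

end

lemma path_length_cases:
  "(n + 1) div 2 \<le> (n + 2) div 3 + 1 \<Longrightarrow> 1 \<le> n \<Longrightarrow> n \<in> {1, 2, 3, 4, 5, 6, 7, 8, 10 :: nat}"
  by simp presburger

lemma cycle_length_cases:
  "n div 2 \<le> (n + 2) div 3 + 1 \<Longrightarrow> 3 \<le> n \<Longrightarrow> n \<notin> {3, 4, 5, 7} \<Longrightarrow>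
    n \<in> {6, 8, 9, 10, 11, 13 :: nat}"
  by simp presburger

theorem corollary20:
  fixes V :: "'a set" and E :: "'a \<Rightarrow> 'a \<Rightarrow> bool"
  assumes "simple_graph V E"
    and "almost_well_covered V E"
    and "\<not> has_induced_cycle V E 3" and "\<not> has_induced_cycle V E 4"
    and "\<not> has_induced_cycle V E 5" and "\<not> has_induced_cycle V E 7"
    and "\<not> (\<exists>v\<in>V. has_type V E v 2)"
    and "x \<in> V0 V E"
  shows "(\<exists>n\<in>{1,2,3,4,5,6,7,8,10}. induced_iso_path E (component (E0 V E) x) n)
       \<or> (\<exists>n\<in>{6,8,9,10,11,13}. induced_iso_cycle E (component (E0 V E) x) n)"
proof -
  interpret awc_C3457_free_graph V E
    by unfold_locales (use assms in auto)
  have "x \<in> component (E0 V E) x" unfolding component_def by simp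
  from V0_component_path_or_cycle[OF assms(8)] show ?thesis
  proof (elim disjE exE conjE)
    fix n assume path: "induced_iso_path E (component (E0 V E) x) n"
    with \<open>x \<in> component (E0 V E) x\<close> have "1 \<le> n"
      unfolding induced_iso_path_def bij_betw_def by auto
    with path_length_cases path_component_length[OF assms(8) path] path show ?thesis by blast
  next
    fix n assume cycle: "induced_iso_cycle E (component (E0 V E) x) n" and "3 \<le> n"
    have "has_induced_cycle V E n"
      using has_induced_cycle_if_induced_iso_cycle[OF cycle component_E0_subset_V[OF assms(8)]] .
    with assms(3-6) have "n \<notin> {3, 4, 5, 7}" by auto
    with cycle_length_cases cycle_component_length[OF assms(8) cycle] cycle \<open>3 \<le> n\<close>
    show ?thesis by blast
  qed
qed

end
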